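(* Let $(F,v)$ be a valued field. Every nonsingular quadratic space $(V,q)$ over $F$ admits a $v$-norm which is compatible with $q$ of some depth $\varepsilon\in\frac12\Gamma_F$ with $0\le\varepsilon\le v(2)$. Moreover, every hyperbolic quadratic space over $F$ admits a tame (i.e. depth $0$) compatible $v$-norm.
   Context: $F$ is a field with valuation $v\colon F\to\Gamma\cup\{\infty\}$, $\Gamma$ divisible totally ordered abelian group, $\Gamma_F=v(F^\times)$, $\frac12\Gamma_F=\{\gamma\in\Gamma:2\gamma\in\Gamma_F\}$; $v(2)=\infty$ iff $\operatorname{char}F=2$. A quadratic form is nonsingular if its polar form $b_q(x,y)=q(x+y)-q(x)-q(y)$ is nondegenerate. A $v$-norm on a finite-dimensional $F$-space $V$ is a map $\alpha\colon V\to\Gamma\cup\{\infty\}$ with $\alpha(x)=\infty\iff x=0$, $\alpha(\lambda x)=v(\lambda)+\alpha(x)$, $\alpha(x+y)\ge\min(\alpha(x),\alpha(y))$, admitting a basis $(e_i)$ with $\alpha(\sum\lambda_ie_i)=\min_i\alpha(\lambda_ie_i)$. For $\varepsilon\in\Gamma$, $\varepsilon\ge0$, $\alpha$ is compatible of depth $\varepsilon$ with $q$ if (a) $v(b_q(x,y))\ge\alpha(x)+\alpha(y)+\varepsilon$ for all $x,y$; (b) $v(q(x))\ge2\alpha(x)$ for all $x$; (c) for every $x\neq0$ there exists $y\neq0$ with $v(b_q(x,y))=\alpha(x)+\alpha(y)+\varepsilon$. Tame means depth $0$. *)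

theory Defs
  imports Complex_Main "HOL-Library.Extended"
begin

text \<open>Values of the valuation live in \<open>\<Gamma> \<union> {\<infinity>}\<close>, modelled as \<open>'g extended\<close>
  (the constructor \<open>Minf\<close> is never used).\<close>

definition divisible_group :: "'g::linordered_ab_group_add itself \<Rightarrow> bool" where
  "divisible_group _ \<longleftrightarrow> (\<forall>(g::'g) (n::nat). n > 0 \<longrightarrow> (\<exists>h. (\<Sum>i<n. h) = g))"

definition valuation :: "('k::field \<Rightarrow> 'g::linordered_ab_group_add extended) \<Rightarrow> bool" where
  "valuation v \<longleftrightarrow>
     (\<forall>x. v x \<noteq> Minf) \<and>
     (\<forall>x. v x = Pinf \<longleftrightarrow> x = 0) \<and>
     (\<forall>x y. v (x * y) = v x + v y) \<and>
     (\<forall>x y. v (x + y) \<ge> min (v x) (v y))"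

definition half_value_group :: "('k::field \<Rightarrow> 'g::linordered_ab_group_add extended) \<Rightarrow> 'g set" where
  "half_value_group v = {\<gamma>. \<exists>a. a \<noteq> 0 \<and> v a = Fin (\<gamma> + \<gamma>)}"

definition polar :: "('v::ab_group_add \<Rightarrow> 'k::field) \<Rightarrow> 'v \<Rightarrow> 'v \<Rightarrow> 'k" where
  "polar q x y = q (x + y) - q x - q y"

definition quadratic_form :: "('k::field \<Rightarrow> 'v::ab_group_add \<Rightarrow> 'v) \<Rightarrow> ('v \<Rightarrow> 'k) \<Rightarrow> bool" where
  "quadratic_form scale q \<longleftrightarrow>
     (\<forall>a x. q (scale a x) = a * a * q x) \<and>
     (\<forall>x y z. polar q (x + y) z = polar q x z + polar q y z) \<and>
     (\<forall>a x y. polar q (scale a x) y = a * polar q x y)"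

definition nonsingular :: "('v::ab_group_add \<Rightarrow> 'k::field) \<Rightarrow> bool" where
  "nonsingular q \<longleftrightarrow> (\<forall>x. (\<forall>y. polar q x y = 0) \<longrightarrow> x = 0)"

definition fin_dim_space :: "('k::field \<Rightarrow> 'v::ab_group_add \<Rightarrow> 'v) \<Rightarrow> bool" where
  "fin_dim_space scale \<longleftrightarrow> vector_space scale \<and>
     (\<exists>B. finite B \<and> \<not> module.dependent scale B \<and> module.span scale B = UNIV)"

text \<open>Hyperbolic quadratic space: orthogonal sum of hyperbolic planes, i.e. there is a
  basis \<open>e\<^sub>1,\<dots>,e\<^sub>n,f\<^sub>1,\<dots>,f\<^sub>n\<close> with \<open>q(\<Sum>a\<^sub>ie\<^sub>i + b\<^sub>if\<^sub>i) = \<Sum>a\<^sub>ib\<^sub>i\<close>.\<close>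
definition hyperbolic :: "('k::field \<Rightarrow> 'v::ab_group_add \<Rightarrow> 'v) \<Rightarrow> ('v \<Rightarrow> 'k) \<Rightarrow> bool" where
  "hyperbolic scale q \<longleftrightarrow>
     (\<exists>(n::nat) (e::nat \<Rightarrow> 'v) (f::nat \<Rightarrow> 'v).
        inj_on e {..<n} \<and> inj_on f {..<n} \<and> e ` {..<n} \<inter> f ` {..<n} = {} \<and>
        \<not> module.dependent scale (e ` {..<n} \<union> f ` {..<n}) \<and>
        module.span scale (e ` {..<n} \<union> f ` {..<n}) = UNIV \<and>
        (\<forall>a b. q (\<Sum>i<n. scale (a i) (e i) + scale (b i) (f i)) = (\<Sum>i<n. a i * b i)))"

definition v_norm :: "('k::field \<Rightarrow> 'g::linordered_ab_group_add extended) \<Rightarrow>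
    ('k \<Rightarrow> 'v::ab_group_add \<Rightarrow> 'v) \<Rightarrow> ('v \<Rightarrow> 'g extended) \<Rightarrow> bool" where
  "v_norm v scale \<alpha> \<longleftrightarrow>
     (\<forall>x. \<alpha> x \<noteq> Minf) \<and>
     (\<forall>x. \<alpha> x = Pinf \<longleftrightarrow> x = 0) \<and>
     (\<forall>a x. \<alpha> (scale a x) = v a + \<alpha> x) \<and>
     (\<forall>x y. \<alpha> (x + y) \<ge> min (\<alpha> x) (\<alpha> y)) \<and>
     (\<exists>B. finite B \<and> \<not> module.dependent scale B \<and> module.span scale B = UNIV \<and>
        (\<forall>c. \<alpha> (\<Sum>b\<in>B. scale (c b) b) =
               (if B = {} then Pinf else Min ((\<lambda>b. \<alpha> (scale (c b) b)) ` B))))"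

definition compatible_depth :: "('k::field \<Rightarrow> 'g::linordered_ab_group_add extended) \<Rightarrow>
    ('v::ab_group_add \<Rightarrow> 'k) \<Rightarrow> ('v \<Rightarrow> 'g extended) \<Rightarrow> 'g \<Rightarrow> bool" where
  "compatible_depth v q \<alpha> \<epsilon> \<longleftrightarrow>
     0 \<le> \<epsilon> \<and>
     (\<forall>x y. v (polar q x y) \<ge> \<alpha> x + \<alpha> y + Fin \<epsilon>) \<and>
     (\<forall>x. v (q x) \<ge> \<alpha> x + \<alpha> x) \<and>
     (\<forall>x. x \<noteq> 0 \<longrightarrow> (\<exists>y. y \<noteq> 0 \<and> v (polar q x y) = \<alpha> x + \<alpha> y + Fin \<epsilon>))"

end

theory Submission
  imports Defs
begin

text \<open>Nonsingularity lets one split \<open>V\<close> orthogonally, Gram--Schmidt style, into anisotropic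
  lines \<open>F b\<^sub>i\<close> and planes \<open>F b\<^sub>i + F b\<^sub>i'\<close> with \<open>b\<^sub>q(b\<^sub>i, b\<^sub>i) = 0\<close> and \<open>b\<^sub>q(b\<^sub>i, b\<^sub>i') = 1\<close>.
  The norm \<open>\<alpha>(\<Sum> \<lambda>\<^sub>i b\<^sub>i) = min (v(\<lambda>\<^sub>i) + \<gamma>\<^sub>i)\<close> split by such a basis is compatible of depth
  \<open>\<epsilon>\<close> as soon as \<open>v(b\<^sub>q(b\<^sub>i, b\<^sub>i)) = 2\<gamma>\<^sub>i + \<epsilon>\<close> on lines, \<open>\<gamma>\<^sub>i + \<gamma>\<^sub>i' + \<epsilon> = 0\<close> on planes and
  \<open>2\<gamma>\<^sub>i \<le> v(q(b\<^sub>i))\<close> throughout; condition (c) is then attained at the dual basis vectors.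
  If \<open>char F \<noteq> 2\<close>, take \<open>\<epsilon> = v(2)\<close> and \<open>\<gamma>\<^sub>i = v(q(b\<^sub>i))/2\<close> on lines. In characteristic 2 only
  planes occur, and \<open>\<epsilon>\<close> is the least nonnegative value with \<open>-2\<epsilon> \<le> v(q(b\<^sub>i)) + v(q(b\<^sub>i'))\<close>
  on every plane. A hyperbolic basis is already such a splitting with \<open>q(b\<^sub>i) = 0\<close>, so
  \<open>\<gamma> = 0\<close> and \<open>\<epsilon> = 0\<close> work.\<close>

lemma valuation_zero: "valuation v \<Longrightarrow> v 0 = Pinf"
  unfolding valuation_def by blast

lemma valuation_eq_Pinf_iff: "valuation v \<Longrightarrow> v x = Pinf \<longleftrightarrow> x = 0"
  unfolding valuation_def by blast

lemma valuation_not_Minf: "valuation v \<Longrightarrow> v x \<noteq> Minf"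
  unfolding valuation_def by blast

lemma valuation_mult: "valuation v \<Longrightarrow> v (x * y) = v x + v y"
  unfolding valuation_def by blast

lemma valuation_add_ge: "valuation v \<Longrightarrow> min (v x) (v y) \<le> v (x + y)"
  unfolding valuation_def by blast

lemma valuation_Fin: "valuation v \<Longrightarrow> x \<noteq> 0 \<Longrightarrow> \<exists>g. v x = Fin g"
  unfolding valuation_def by (metis extended.exhaust)

lemma valuation_one:
  assumes "valuation v" shows "v 1 = Fin 0"
proof -
  obtain g where g: "v 1 = Fin g" using valuation_Fin[OF assms, of 1] by auto
  have "v 1 = v 1 + v 1" using valuation_mult[OF assms, of 1 1] by simp
  then show ?thesis using g by simp
qed

lemma valuation_inverse:
  assumes "valuation v" "a \<noteq> 0" "v a = Fin g" shows "v (inverse a) = Fin (- g)"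
proof -
  obtain h where h: "v (inverse a) = Fin h" using valuation_Fin[OF assms(1), of "inverse a"] assms(2) by auto
  have "v 1 = v a + v (inverse a)" using valuation_mult[OF assms(1), of a "inverse a"] assms(2) by simp
  then show ?thesis using valuation_one[OF assms(1)] assms(3) h by (simp add: eq_neg_iff_add_eq_0 add.commute)
qed

lemma valuation_two_ge_zero: "valuation v \<Longrightarrow> Fin 0 \<le> v 2"
  using valuation_add_ge[of v 1 1] valuation_one[of v] by simp

lemma valuation_sum_ge:
  assumes "valuation v" "\<And>i. i \<in> A \<Longrightarrow> t \<le> v (f i)" shows "t \<le> v (sum f A)"
  using assms(2)
proof (induct A rule: infinite_finite_induct)
  case (insert x F)
  then have "t \<le> min (v (f x)) (v (sum f F))" by auto
  also have "\<dots> \<le> v (f x + sum f F)" by (rule valuation_add_ge[OF assms(1)])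
  finally show ?case using insert by simp
qed (simp_all add: valuation_zero[OF assms(1)])

definition fin_part :: "'g extended \<Rightarrow> 'g::linordered_ab_group_add" where
  "fin_part e = (case e of Fin g \<Rightarrow> g | _ \<Rightarrow> 0)"

lemma fin_part_Fin[simp]: "fin_part (Fin g) = g"
  unfolding fin_part_def by simp

lemma Fin_fin_part_le: "e \<noteq> Minf \<Longrightarrow> Fin (fin_part e) \<le> e"
  by (cases e) auto

lemma valuation_fin_part: "valuation v \<Longrightarrow> x \<noteq> 0 \<Longrightarrow> v x = Fin (fin_part (v x))"
  using valuation_Fin by fastforce

lemma min_add_distrib_left_mono:
  fixes x y z :: "'a::{linorder, ordered_ab_semigroup_add}"
  shows "min x y + z = min (x + z) (y + z)"
proof (cases "x \<le> y")
  case False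
  then have "y + z \<le> x + z" by (simp add: add_right_mono)
  then show ?thesis using False by (simp add: min_def)
qed (simp add: min_def add_right_mono)

lemma add_self_le_add_self_iff:
  fixes a b :: "'g::linordered_ab_group_add"
  shows "a + a \<le> b + b \<longleftrightarrow> a \<le> b"
  by (metis add_mono add_strict_mono not_less)

lemma add_self_inject:
  fixes a b :: "'g::linordered_ab_group_add"
  shows "a + a = b + b \<longleftrightarrow> a = b"
  by (metis add_self_le_add_self_iff order_antisym order_refl)

lemma le_add_Fin_nonneg: "0 \<le> e \<Longrightarrow> (c::'g::ordered_ab_group_add extended) \<le> c + Fin e"
  by (cases c) auto

definition half :: "'g::linordered_ab_group_add \<Rightarrow> 'g" where
  "half g = (SOME h. h + h = g)"

lemma half_add_half:
  assumes "divisible_group TYPE('g::linordered_ab_group_add)" shows "half (g::'g) + half g = g"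
proof -
  obtain h :: 'g where "(\<Sum>i<(2::nat). h) = g"
    using assms unfolding divisible_group_def by (metis zero_less_numeral)
  then have "h + h = g" by (simp add: numeral_2_eq_2)
  then show ?thesis unfolding half_def by (rule someI[of "\<lambda>h. h + h = g"])
qed

lemma half_value_group_half:
  assumes "valuation v" "divisible_group TYPE('g)" "a \<noteq> 0" "v a = Fin (g::'g::linordered_ab_group_add)"
  shows "half g \<in> half_value_group v"
  using assms half_add_half[OF assms(2), of g] unfolding half_value_group_def by auto

lemma zero_in_half_value_group:
  assumes "valuation v" shows "0 \<in> half_value_group v"
  unfolding half_value_group_def using valuation_one[OF assms] by (intro CollectI exI[of _ 1]) simp

lemma Max_half_in_half_value_group:
  assumes "valuation v" "divisible_group TYPE('g)" "finite I"
    and w_values: "\<forall>i\<in>I. \<exists>a. a \<noteq> 0 \<and> v a = Fin (w i :: 'g::linordered_ab_group_add)"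
  shows "Max (insert 0 ((\<lambda>i. half (w i)) ` I)) \<in> half_value_group v"
proof -
  have "Max (insert 0 ((\<lambda>i. half (w i)) ` I)) \<in> insert 0 ((\<lambda>i. half (w i)) ` I)"
    using assms(3) by (intro Max_in) auto
  then consider "Max (insert 0 ((\<lambda>i. half (w i)) ` I)) = 0"
    | i where "i \<in> I" "Max (insert 0 ((\<lambda>i. half (w i)) ` I)) = half (w i)" by auto
  then show ?thesis
  proof cases
    case (2 i)
    then obtain a where "a \<noteq> 0" "v a = Fin (w i)" using w_values by blast
    then show ?thesis using 2 half_value_group_half[OF assms(1,2)] by simp
  qed (simp add: zero_in_half_value_group[OF assms(1)])
qed

text \<open>The weight of \<open>b\<^sub>i\<close> in a plane whose exponents are \<open>a\<close> at \<open>b\<^sub>i\<close> and \<open>b\<close> at \<open>b\<^sub>i'\<close>: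
  the symmetric solution of \<open>\<gamma>\<^sub>i + \<gamma>\<^sub>i' = -\<epsilon>\<close>.\<close>

definition plane_weight :: "'g \<Rightarrow> 'g \<Rightarrow> 'g \<Rightarrow> 'g::linordered_ab_group_add" where
  "plane_weight \<epsilon> a b = half (half (a - b) - \<epsilon>)"

lemma plane_weight_pair:
  assumes dv: "divisible_group TYPE('g::linordered_ab_group_add)"
  shows "plane_weight \<epsilon> a b + plane_weight \<epsilon> b a = - (\<epsilon>::'g)"
proof (rule add_self_inject[THEN iffD1])
  let ?h = "half (a - b)" and ?h' = "half (b - a)"
  have "(?h + ?h') + (?h + ?h') = (?h + ?h) + (?h' + ?h')" by (simp add: algebra_simps)
  also have "\<dots> = 0" using half_add_half[OF dv, of "a - b"] half_add_half[OF dv, of "b - a"] by simp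
  finally have "?h + ?h' = 0" by simp
  let ?g = "plane_weight \<epsilon> a b" and ?g' = "plane_weight \<epsilon> b a"
  have "(?g + ?g') + (?g + ?g') = (?g + ?g) + (?g' + ?g')" by (simp add: algebra_simps)
  also have "\<dots> = (?h - \<epsilon>) + (?h' - \<epsilon>)"
    using half_add_half[OF dv, of "?h - \<epsilon>"] half_add_half[OF dv, of "?h' - \<epsilon>"]
    unfolding plane_weight_def by simp
  also have "\<dots> = - \<epsilon> + - \<epsilon>" using \<open>?h + ?h' = 0\<close> by (simp add: algebra_simps)
  finally show "(?g + ?g') + (?g + ?g') = - \<epsilon> + - \<epsilon>" .
qed

lemma plane_weight_double_le:
  assumes dv: "divisible_group TYPE('g::linordered_ab_group_add)" and "- (\<epsilon> + \<epsilon>) \<le> a + (b::'g)"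
  shows "plane_weight \<epsilon> a b + plane_weight \<epsilon> a b \<le> a"
proof -
  let ?h = "half (a - b)"
  have "(?h - \<epsilon>) + (?h - \<epsilon>) = (a + a) + (- (\<epsilon> + \<epsilon>) - (a + b))"
    using half_add_half[OF dv, of "a - b"] by (simp add: algebra_simps)
  also have "\<dots> \<le> (a + a) + 0" using assms(2) by (intro add_left_mono) simp
  finally have "?h - \<epsilon> \<le> a" by (simp only: add_self_le_add_self_iff add_0_right)
  then show ?thesis using half_add_half[OF dv, of "?h - \<epsilon>"] unfolding plane_weight_def by simp
qed

lemma image_concat_lessThan:
  fixes m :: nat
  shows "(\<lambda>k. if k < m then e k else f (k - m)) ` {..<m + m} = e ` {..<m} \<union> f ` {..<m}"
proof
  show "e ` {..<m} \<union> f ` {..<m} \<subseteq> (\<lambda>k. if k < m then e k else f (k - m)) ` {..<m + m}"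
  proof
    fix x assume "x \<in> e ` {..<m} \<union> f ` {..<m}"
    then consider i where "i < m" "x = e i" | i where "i < m" "x = f i" by auto
    then show "x \<in> (\<lambda>k. if k < m then e k else f (k - m)) ` {..<m + m}"
    proof cases
      case (1 i)
      then show ?thesis by (intro image_eqI[of _ _ i]) auto
    next
      case (2 i)
      then show ?thesis by (intro image_eqI[of _ _ "i + m"]) auto
    qed
  qed
qed auto

locale quadratic_space = vector_space scale for scale :: "'k::field \<Rightarrow> 'v::ab_group_add \<Rightarrow> 'v" +
  fixes q :: "'v \<Rightarrow> 'k"
  assumes quadratic: "quadratic_form scale q"
begin

lemma quadratic_scale: "q (scale a x) = a * a * q x"
  using quadratic unfolding quadratic_form_def by blast

lemma polar_add_left: "polar q (x + y) z = polar q x z + polar q y z"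
  using quadratic unfolding quadratic_form_def by blast

lemma polar_scale_left: "polar q (scale a x) y = a * polar q x y"
  using quadratic unfolding quadratic_form_def by blast

lemma polar_commute: "polar q x y = polar q y x"
  unfolding polar_def by (simp add: add.commute algebra_simps)

lemma polar_add_right: "polar q z (x + y) = polar q z x + polar q z y"
  using polar_add_left polar_commute by metis

lemma polar_scale_right: "polar q y (scale a x) = a * polar q y x"
  using polar_scale_left polar_commute by metis

lemma polar_zero_left[simp]: "polar q 0 y = 0"
  using polar_scale_left[of 0 0 y] by simp

lemma polar_zero_right[simp]: "polar q y 0 = 0"
  using polar_zero_left polar_commute by metis

lemma quadratic_zero[simp]: "q 0 = 0"
  using quadratic_scale[of 0 0] by simp

lemma quadratic_add: "q (x + y) = q x + q y + polar q x y"
  unfolding polar_def by simp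

lemma polar_diff_left: "polar q (x - y) z = polar q x z - polar q y z"
  using polar_add_left[of "x - y" y z] by (simp add: algebra_simps)

lemma polar_sum_left: "polar q (\<Sum>i\<in>A. f i) z = (\<Sum>i\<in>A. polar q (f i) z)"
  by (induct A rule: infinite_finite_induct) (auto simp: polar_add_left)

lemma polar_sum_right: "polar q z (\<Sum>i\<in>A. f i) = (\<Sum>i\<in>A. polar q z (f i))"
  by (induct A rule: infinite_finite_induct) (auto simp: polar_add_right)

lemma polar_self: "polar q x x = 2 * q x"
proof -
  have "x + x = scale 2 x" by (metis one_add_one scale_left_distrib scale_one)
  then show ?thesis unfolding polar_def by (simp add: quadratic_scale)
qed

definition dual_families :: "nat \<Rightarrow> (nat \<Rightarrow> 'v) \<Rightarrow> (nat \<Rightarrow> 'v) \<Rightarrow> bool" where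
  "dual_families n b d \<longleftrightarrow> (\<forall>i<n. \<forall>j<n. polar q (b i) (d j) = (if i = j then 1 else 0))"

lemma polar_dual_sum:
  assumes "dual_families n b d" "J \<subseteq> {..<n}" "j < n"
  shows "polar q (\<Sum>i\<in>J. scale (c i) (b i)) (d j) = (if j \<in> J then c j else 0)"
proof -
  have "polar q (\<Sum>i\<in>J. scale (c i) (b i)) (d j) = (\<Sum>i\<in>J. c i * (if i = j then 1 else 0))"
    unfolding polar_sum_left polar_scale_left using assms unfolding dual_families_def
    by (intro sum.cong) auto
  also have "\<dots> = (if j \<in> J then c j else 0)"
    using assms(2) finite_subset[OF assms(2)] by (simp add: if_distrib sum.delta' cong: if_cong)
  finally show ?thesis .
qed

lemma dual_families_inj: "dual_families n b d \<Longrightarrow> inj_on b {..<n}"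
  unfolding dual_families_def inj_on_def by (metis lessThan_iff one_neq_zero)

lemma dual_families_expansion:
  assumes "dual_families n b d" "x \<in> span (b ` {..<n})"
  shows "x = (\<Sum>i<n. scale (polar q x (d i)) (b i))"
proof -
  obtain u where "x = (\<Sum>w\<in>b ` {..<n}. scale (u w) w)"
    using assms(2) span_finite[of "b ` {..<n}"] by auto
  then have x: "x = (\<Sum>i<n. scale (u (b i)) (b i))"
    using sum.reindex[OF dual_families_inj[OF assms(1)]] by (simp add: comp_def)
  have "polar q x (d j) = u (b j)" if "j < n" for j
    using polar_dual_sum[OF assms(1) order_refl that, of "\<lambda>i. u (b i)"] x that by simp
  then show ?thesis using x by (intro trans[OF x] sum.cong) auto
qed

lemma dual_families_independent:
  assumes "dual_families n b d"
  shows "\<not> dependent (b ` {..<n})"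
proof
  assume "dependent (b ` {..<n})"
  then obtain t u w where t: "finite t" "t \<subseteq> b ` {..<n}" "(\<Sum>w\<in>t. scale (u w) w) = 0"
    and w: "w \<in> t" "u w \<noteq> 0" unfolding dependent_explicit by blast
  define J where "J = {i. i < n \<and> b i \<in> t}"
  have tJ: "t = b ` J" using t(2) unfolding J_def by auto
  have "inj_on b J" using dual_families_inj[OF assms] unfolding J_def by (auto intro: inj_on_subset)
  then have J0: "(\<Sum>i\<in>J. scale (u (b i)) (b i)) = 0"
    using t(3) sum.reindex[of b J "\<lambda>w. scale (u w) w"] tJ by (simp add: comp_def)
  obtain j where j: "j \<in> J" "w = b j" using w tJ by auto
  have "polar q (\<Sum>i\<in>J. scale (u (b i)) (b i)) (d j) = u (b j)"
    using polar_dual_sum[OF assms, of J j "\<lambda>i. u (b i)"] j unfolding J_def by auto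
  then show False using J0 w j by simp
qed

lemma dual_families_length_le:
  assumes "dual_families n b d" "finite B" "span B = UNIV"
  shows "n \<le> card B"
  using independent_span_bound[OF assms(2) dual_families_independent[OF assms(1)]] assms(3)
    card_image[OF dual_families_inj[OF assms(1)]] by simp

text \<open>An orthogonal decomposition of the space into anisotropic lines \<open>F b\<^sub>i\<close> (the fixed
  points of the involution \<open>p\<close>) and planes \<open>F b\<^sub>i + F b\<^sub>p\<^sub>i\<close> with \<open>b\<^sub>q(b\<^sub>i, b\<^sub>i) = 0\<close> and
  \<open>b\<^sub>q(b\<^sub>i, b\<^sub>p\<^sub>i) = 1\<close>, recorded together with the polar-dual family \<open>d\<close>.\<close>

definition splitting :: "nat \<Rightarrow> (nat \<Rightarrow> 'v) \<Rightarrow> (nat \<Rightarrow> 'v) \<Rightarrow> (nat \<Rightarrow> nat) \<Rightarrow> bool" where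
  "splitting n b d p \<longleftrightarrow> dual_families n b d \<and> (\<forall>i<n. p i < n \<and> p (p i) = i) \<and>
     (\<forall>i<n. p i = i \<longrightarrow> polar q (b i) (b i) \<noteq> 0 \<and> d i = scale (inverse (polar q (b i) (b i))) (b i)) \<and>
     (\<forall>i<n. p i \<noteq> i \<longrightarrow> polar q (b i) (b i) = 0 \<and> d i = b (p i))"

lemma splitting_empty: "splitting 0 b d p"
  unfolding splitting_def dual_families_def by simp

lemma splitting_dual_families: "splitting n b d p \<Longrightarrow> dual_families n b d"
  unfolding splitting_def by blast

lemma splitting_involution: "splitting n b d p \<Longrightarrow> i < n \<Longrightarrow> p i < n \<and> p (p i) = i"
  unfolding splitting_def by blast

lemma splitting_line:
  "splitting n b d p \<Longrightarrow> i < n \<Longrightarrow> p i = i \<Longrightarrow>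
     polar q (b i) (b i) \<noteq> 0 \<and> d i = scale (inverse (polar q (b i) (b i))) (b i)"
  unfolding splitting_def by blast

lemma splitting_plane:
  "splitting n b d p \<Longrightarrow> i < n \<Longrightarrow> p i \<noteq> i \<Longrightarrow> polar q (b i) (b i) = 0 \<and> d i = b (p i)"
  unfolding splitting_def by blast

lemma splitting_basis_in_dual:
  assumes S: "splitting n b d p" and j: "j < n"
  shows "b j = (if p j = j then scale (polar q (b j) (b j)) (d j) else d (p j))"
proof (cases "p j = j")
  case False
  then have "p j < n" "p (p j) = j" "p (p j) \<noteq> p j" using splitting_involution[OF S j] by auto
  then show ?thesis using splitting_plane[OF S] False by metis
qed (use splitting_line[OF S j] in simp)

lemma polar_splitting_basis:
  assumes S: "splitting n b d p" and "i < n" "j < n"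
  shows "polar q (b i) (b j) =
    (if p j = j then (if i = j then polar q (b j) (b j) else 0) else (if i = p j then 1 else 0))"
proof (cases "p j = j")
  case True
  then show ?thesis
    using arg_cong[OF splitting_basis_in_dual[OF S assms(3)], of "polar q (b i)"]
      splitting_dual_families[OF S] assms
    by (simp add: polar_scale_right dual_families_def)
next
  case False
  then show ?thesis
    using splitting_basis_in_dual[OF S assms(3)] splitting_involution[OF S assms(3)]
      splitting_dual_families[OF S] assms
    by (simp add: dual_families_def)
qed

lemma splitting_orthogonal_basis:
  assumes S: "splitting n b d p" and w: "\<forall>k<n. polar q w (d k) = 0" and j: "j < n"
  shows "polar q w (b j) = 0"
proof (cases "p j = j")
  case True
  then show ?thesis
    using arg_cong[OF splitting_basis_in_dual[OF S j], of "polar q w"] w j by (simp add: polar_scale_right)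
next
  case False
  then show ?thesis using splitting_basis_in_dual[OF S j] splitting_involution[OF S j] w by simp
qed

lemma splitting_add_line:
  assumes S: "splitting n b d p" and x: "\<forall>k<n. polar q x (d k) = 0" "polar q x x \<noteq> 0"
  shows "splitting (Suc n) (b(n := x)) (d(n := scale (inverse (polar q x x)) x)) (p(n := n))"
proof -
  have "polar q (b k) x = 0" if "k < n" for k
    using splitting_orthogonal_basis[OF S x(1) that] polar_commute by metis
  then have "dual_families (Suc n) (b(n := x)) (d(n := scale (inverse (polar q x x)) x))"
    using splitting_dual_families[OF S] x unfolding dual_families_def
    by (auto simp: less_Suc_eq polar_scale_right)
  then show ?thesis
    using S x(2) unfolding splitting_def by (auto simp: less_Suc_eq)
qed

lemma splitting_add_plane:
  assumes S: "splitting n b d p"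
    and wf: "\<forall>k<n. polar q w (d k) = 0" "\<forall>k<n. polar q f (d k) = 0"
    and "polar q w w = 0" "polar q f f = 0" "polar q w f = 1"
  shows "splitting (Suc (Suc n)) (b(n := w, Suc n := f)) (d(n := f, Suc n := w))
    (p(n := Suc n, Suc n := n))"
proof -
  have "polar q (b k) w = 0" "polar q (b k) f = 0" if "k < n" for k
    using splitting_orthogonal_basis[OF S wf(1) that] splitting_orthogonal_basis[OF S wf(2) that]
      polar_commute by metis+
  moreover have "polar q f w = 1" using assms(6) polar_commute by metis
  ultimately have "dual_families (Suc (Suc n)) (b(n := w, Suc n := f)) (d(n := f, Suc n := w))"
    using splitting_dual_families[OF S] wf assms(4-6) unfolding dual_families_def
    by (auto simp: less_Suc_eq)
  then show ?thesis
    using S assms(4,5) unfolding splitting_def by (auto simp: less_Suc_eq)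
qed

lemma splitting_complement_nondegenerate:
  assumes ns: "nonsingular q" and S: "splitting n b d p" and sp: "span (b ` {..<n}) \<noteq> UNIV"
  obtains w y where "\<forall>k<n. polar q w (d k) = 0" "\<forall>k<n. polar q y (d k) = 0" "polar q w y \<noteq> 0"
proof -
  have du: "dual_families n b d" by (rule splitting_dual_families[OF S])
  define proj where "proj z = (\<Sum>i<n. scale (polar q z (d i)) (b i))" for z
  have perp: "\<forall>k<n. polar q (z - proj z) (d k) = 0" for z
    using polar_dual_sum[OF du order_refl, of _ "\<lambda>i. polar q z (d i)"] unfolding proj_def
    by (simp add: polar_diff_left)
  obtain z where z: "z \<notin> span (b ` {..<n})" using sp by auto
  define w where "w = z - proj z"
  have "proj z \<in> span (b ` {..<n})"
    unfolding proj_def by (intro span_sum span_scale span_base) auto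
  then have "w \<noteq> 0" using z unfolding w_def by auto
  then obtain x where x: "polar q w x \<noteq> 0" using ns unfolding nonsingular_def by blast
  have "polar q w (proj x) = 0"
    unfolding proj_def polar_sum_right polar_scale_right
    using splitting_orthogonal_basis[OF S perp[of z]] unfolding w_def by simp
  moreover have "polar q w (x - proj x) = polar q w x - polar q w (proj x)"
    using polar_diff_left[of x "proj x" w] polar_commute by metis
  ultimately have "polar q w (x - proj x) \<noteq> 0" using x by simp
  then show ?thesis using that perp unfolding w_def by blast
qed

lemma splitting_extend:
  assumes ns: "nonsingular q" and S: "splitting n b d p" and sp: "span (b ` {..<n}) \<noteq> UNIV"
  shows "\<exists>n' b' d' p'. n < n' \<and> splitting n' b' d' p'"
proof (cases "\<exists>x. (\<forall>k<n. polar q x (d k) = 0) \<and> polar q x x \<noteq> 0")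
  case True
  then show ?thesis using splitting_add_line[OF S] by (meson lessI)
next
  case False
  obtain w y where wy: "\<forall>k<n. polar q w (d k) = 0" "\<forall>k<n. polar q y (d k) = 0" "polar q w y \<noteq> 0"
    using splitting_complement_nondegenerate[OF ns S sp] .
  define f where "f = scale (inverse (polar q w y)) y"
  have "\<forall>k<n. polar q f (d k) = 0" using wy(2) unfolding f_def by (simp add: polar_scale_left)
  moreover have "polar q w f = 1" using wy(3) unfolding f_def by (simp add: polar_scale_right)
  ultimately have "splitting (Suc (Suc n)) (b(n := w, Suc n := f)) (d(n := f, Suc n := w))
      (p(n := Suc n, Suc n := n))"
    using False wy(1) by (intro splitting_add_plane[OF S]) auto
  then show ?thesis by (meson less_Suc_eq)
qed

lemma splitting_exists:
  assumes ns: "nonsingular q" and B: "finite B" "span B = UNIV"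
  obtains n b d p where "splitting n b d p" "span (b ` {..<n}) = UNIV"
proof -
  define N where "N = {n. \<exists>b d p. splitting n b d p}"
  have bounded: "N \<subseteq> {..card B}"
    unfolding N_def using dual_families_length_le[OF splitting_dual_families B] by auto
  have "0 \<in> N" unfolding N_def using splitting_empty by blast
  then have "Max N \<in> N" using bounded by (intro Max_in) (auto intro: finite_subset)
  then obtain b d p where S: "splitting (Max N) b d p" unfolding N_def by blast
  have "span (b ` {..<Max N}) = UNIV"
  proof (rule ccontr)
    assume "span (b ` {..<Max N}) \<noteq> UNIV"
    then obtain n' where "Max N < n'" "n' \<in> N" using splitting_extend[OF ns S] unfolding N_def by blast
    then show False using Max_ge[OF finite_subset[OF bounded]] by fastforce
  qed
  then show ?thesis using S that by blast
qed

lemma hyperbolic_polar: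
  fixes e f :: "nat \<Rightarrow> 'v"
  assumes Q: "\<forall>a b. q (\<Sum>i<m. scale (a i) (e i) + scale (b i) (f i)) = (\<Sum>i<m. a i * b i)"
  shows "polar q (\<Sum>i<m. scale (a i) (e i) + scale (b i) (f i)) (\<Sum>i<m. scale (a' i) (e i) + scale (b' i) (f i))
    = (\<Sum>i<m. a i * b' i + a' i * b i)"
proof -
  let ?E = "\<lambda>a b. \<Sum>i<m. scale (a i) (e i) + scale (b i) (f i)"
  have "?E a b + ?E a' b' = ?E (\<lambda>i. a i + a' i) (\<lambda>i. b i + b' i)"
    unfolding sum.distrib[symmetric] by (intro sum.cong) (simp_all add: scale_left_distrib ac_simps)
  then have "polar q (?E a b) (?E a' b')
      = (\<Sum>i<m. (a i + a' i) * (b i + b' i)) - (\<Sum>i<m. a i * b i) - (\<Sum>i<m. a' i * b' i)"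
    unfolding polar_def using Q by simp
  also have "\<dots> = (\<Sum>i<m. (a i + a' i) * (b i + b' i) - a i * b i - a' i * b' i)"
    by (simp add: sum_subtractf)
  also have "\<dots> = (\<Sum>i<m. a i * b' i + a' i * b i)"
    by (intro sum.cong) (simp_all add: algebra_simps)
  finally show ?thesis .
qed

lemma hyperbolic_basis_coordinates:
  fixes e f :: "nat \<Rightarrow> 'v"
  assumes "i < m"
  shows "e i = (\<Sum>k<m. scale (if k = i then 1 else 0) (e k) + scale 0 (f k))"
    and "f i = (\<Sum>k<m. scale 0 (e k) + scale (if k = i then 1 else 0) (f k))"
proof -
  have "(\<Sum>k<m. scale (if k = i then 1 else 0) (e k) + scale 0 (f k)) = (\<Sum>k<m. if k = i then e k else 0)"
    by (intro sum.cong) simp_all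
  then show "e i = (\<Sum>k<m. scale (if k = i then 1 else 0) (e k) + scale 0 (f k))" using assms by simp
  have "(\<Sum>k<m. scale 0 (e k) + scale (if k = i then 1 else 0) (f k)) = (\<Sum>k<m. if k = i then f k else 0)"
    by (intro sum.cong) simp_all
  then show "f i = (\<Sum>k<m. scale 0 (e k) + scale (if k = i then 1 else 0) (f k))" using assms by simp
qed

lemma hyperbolic_basis_isotropic:
  fixes e f :: "nat \<Rightarrow> 'v"
  assumes Q: "\<forall>a b. q (\<Sum>i<m. scale (a i) (e i) + scale (b i) (f i)) = (\<Sum>i<m. a i * b i)"
    and i: "i < m"
  shows "q (e i) = 0" "q (f i) = 0"
proof -
  note coords = hyperbolic_basis_coordinates[OF i, where e = e and f = f]
  show "q (e i) = 0" by (subst coords(1), simp only: Q[rule_format], simp)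
  show "q (f i) = 0" by (subst coords(2), simp only: Q[rule_format], simp)
qed

lemma hyperbolic_basis_polar:
  fixes e f :: "nat \<Rightarrow> 'v"
  assumes Q: "\<forall>a b. q (\<Sum>i<m. scale (a i) (e i) + scale (b i) (f i)) = (\<Sum>i<m. a i * b i)"
    and ij: "i < m" "j < m"
  shows "polar q (e i) (e j) = 0" "polar q (f i) (f j) = 0"
    and "polar q (e i) (f j) = (if i = j then 1 else 0)"
proof -
  note coords = hyperbolic_basis_coordinates[OF ij(1), where e = e and f = f]
    hyperbolic_basis_coordinates[OF ij(2), where e = e and f = f]
  show "polar q (e i) (e j) = 0"
    by (subst coords(1), subst coords(3), simp only: hyperbolic_polar[OF Q], simp)
  show "polar q (f i) (f j) = 0"
    by (subst coords(2), subst coords(4), simp only: hyperbolic_polar[OF Q], simp)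
  have "polar q (e i) (f j) = (\<Sum>k<m. (if k = i then 1 else 0) * (if k = j then 1 else 0))"
    by (subst coords(1), subst coords(4), simp only: hyperbolic_polar[OF Q], simp)
  also have "\<dots> = (\<Sum>k<m. if k = i then (if k = j then 1 else 0) else 0)"
    by (intro sum.cong) simp_all
  finally show "polar q (e i) (f j) = (if i = j then 1 else 0)" using ij by simp
qed

lemma hyperbolic_splitting:
  assumes "hyperbolic scale q"
  obtains n b d p where "splitting n b d p" "span (b ` {..<n}) = UNIV" "\<forall>i<n. p i \<noteq> i \<and> q (b i) = 0"
proof -
  obtain m and e f :: "nat \<Rightarrow> 'v" where
    sp: "span (e ` {..<m} \<union> f ` {..<m}) = UNIV" and
    Q: "\<forall>a b. q (\<Sum>i<m. scale (a i) (e i) + scale (b i) (f i)) = (\<Sum>i<m. a i * b i)"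
    using assms unfolding hyperbolic_def by blast
  note basis = hyperbolic_basis_polar[OF Q] hyperbolic_basis_isotropic[OF Q]
  have fe: "polar q (f i) (e j) = (if i = j then 1 else 0)" if "i < m" "j < m" for i j
    using basis(3)[OF that(2,1)] polar_commute by (metis)
  define b where "b k = (if k < m then e k else f (k - m))" for k
  define p where "p k = (if k < m then k + m else k - m)" for k
  have bp: "b (p k) = (if k < m then f k else e (k - m))" if "k < m + m" for k
    using that unfolding b_def p_def by (cases "k < m") auto
  have inv: "p k < m + m \<and> p (p k) = k \<and> p k \<noteq> k" if "k < m + m" for k
    using that unfolding p_def by auto
  have "dual_families (m + m) b (b \<circ> p)"
    unfolding dual_families_def
  proof (intro allI impI)
    fix i j assume ij: "i < m + m" "j < m + m"
    then show "polar q (b i) ((b \<circ> p) j) = (if i = j then 1 else 0)"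
      using basis fe unfolding comp_def bp[OF ij(2)] by (cases "i < m"; cases "j < m") (auto simp: b_def)
  qed
  then have "splitting (m + m) b (b \<circ> p) p"
    unfolding splitting_def using inv basis by (auto simp: b_def)
  moreover have "b ` {..<m + m} = e ` {..<m} \<union> f ` {..<m}"
    unfolding b_def by (rule image_concat_lessThan)
  moreover have "\<forall>i<m + m. p i \<noteq> i \<and> q (b i) = 0"
    using inv basis by (auto simp: b_def)
  ultimately show ?thesis using that sp by simp
qed

end

locale valued_quadratic_space = quadratic_space scale q
  for scale :: "'k::field \<Rightarrow> 'v::ab_group_add \<Rightarrow> 'v" and q +
  fixes v :: "'k \<Rightarrow> 'g::linordered_ab_group_add extended"
  assumes valuation: "valuation v"
begin

text \<open>When \<open>d\<close> is dual to a basis \<open>b\<close>, \<open>polar q x (d i)\<close> is the \<open>i\<close>-th coordinate of \<open>x\<close>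
  in \<open>b\<close>, so this is the norm \<open>\<Sum>\<^sub>i \<lambda>\<^sub>i b\<^sub>i \<mapsto> min\<^sub>i (v(\<lambda>\<^sub>i) + \<gamma>\<^sub>i)\<close> split by \<open>b\<close>.\<close>

definition coord_norm :: "nat \<Rightarrow> (nat \<Rightarrow> 'v) \<Rightarrow> (nat \<Rightarrow> 'g) \<Rightarrow> 'v \<Rightarrow> 'g extended" where
  "coord_norm n d \<gamma> x =
     (if n = 0 then Pinf else Min ((\<lambda>i. v (polar q x (d i)) + Fin (\<gamma> i)) ` {..<n}))"

lemma coord_norm_le: "i < n \<Longrightarrow> coord_norm n d \<gamma> x \<le> v (polar q x (d i)) + Fin (\<gamma> i)"
  unfolding coord_norm_def by (auto intro: Min_le)

lemma coord_norm_greatest: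
  "(\<And>i. i < n \<Longrightarrow> t \<le> v (polar q x (d i)) + Fin (\<gamma> i)) \<Longrightarrow> t \<le> coord_norm n d \<gamma> x"
  unfolding coord_norm_def by (auto intro: Min.boundedI)

lemma coord_norm_attained:
  assumes "0 < n" obtains i where "i < n" "coord_norm n d \<gamma> x = v (polar q x (d i)) + Fin (\<gamma> i)"
proof -
  have "Min ((\<lambda>i. v (polar q x (d i)) + Fin (\<gamma> i)) ` {..<n}) \<in> (\<lambda>i. v (polar q x (d i)) + Fin (\<gamma> i)) ` {..<n}"
    using assms by (intro Min_in) auto
  then show ?thesis using assms that unfolding coord_norm_def by auto
qed

lemma coord_norm_single_coordinate:
  assumes "j < n" "\<And>k. k < n \<Longrightarrow> polar q y (d k) = (if k = j then s else 0)"
  shows "coord_norm n d \<gamma> y = v s + Fin (\<gamma> j)"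
proof (rule antisym)
  show "coord_norm n d \<gamma> y \<le> v s + Fin (\<gamma> j)"
    using coord_norm_le[OF assms(1), of d \<gamma> y] assms(2)[OF assms(1)] by simp
  show "v s + Fin (\<gamma> j) \<le> coord_norm n d \<gamma> y"
    by (rule coord_norm_greatest) (auto simp: assms(2) valuation_zero[OF valuation])
qed

lemma coord_norm_basis:
  assumes "dual_families n b d" "i < n" shows "coord_norm n d \<gamma> (b i) = Fin (\<gamma> i)"
  using coord_norm_single_coordinate[OF assms(2), of "b i" d 1 \<gamma>] assms
  unfolding dual_families_def by (simp add: valuation_one[OF valuation])

lemma coord_norm_not_Minf: "coord_norm n d \<gamma> x \<noteq> Minf"
proof (cases "n = 0")
  case False
  then obtain i where "coord_norm n d \<gamma> x = v (polar q x (d i)) + Fin (\<gamma> i)"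
    using coord_norm_attained by blast
  then show ?thesis using valuation_not_Minf[OF valuation] by (cases "v (polar q x (d i))") auto
qed (simp add: coord_norm_def)

lemma coord_norm_eq_Pinf_iff:
  assumes "dual_families n b d" "span (b ` {..<n}) = UNIV"
  shows "coord_norm n d \<gamma> x = Pinf \<longleftrightarrow> x = 0"
proof
  assume "x = 0"
  then show "coord_norm n d \<gamma> x = Pinf"
    using coord_norm_greatest[of n Pinf x d \<gamma>] by (simp add: valuation_zero[OF valuation])
next
  assume "coord_norm n d \<gamma> x = Pinf"
  then have "polar q x (d i) = 0" if "i < n" for i
    using coord_norm_le[OF that, of d \<gamma> x] valuation_eq_Pinf_iff[OF valuation]
    by (cases "v (polar q x (d i))") auto
  then show "x = 0" using dual_families_expansion[OF assms(1), of x] assms(2) by simp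
qed

lemma coord_norm_scale: "coord_norm n d \<gamma> (scale a x) = v a + coord_norm n d \<gamma> x"
proof (cases "n = 0")
  case True
  then show ?thesis using valuation_not_Minf[OF valuation, of a]
    unfolding coord_norm_def by (cases "v a") auto
next
  case False
  then obtain i where i: "i < n" "coord_norm n d \<gamma> x = v (polar q x (d i)) + Fin (\<gamma> i)"
    using coord_norm_attained by blast
  show ?thesis
  proof (rule antisym)
    have "coord_norm n d \<gamma> (scale a x) \<le> v (polar q (scale a x) (d i)) + Fin (\<gamma> i)"
      by (rule coord_norm_le[OF i(1)])
    then show "coord_norm n d \<gamma> (scale a x) \<le> v a + coord_norm n d \<gamma> x"
      using i(2) by (simp add: polar_scale_left valuation_mult[OF valuation] add.assoc)
    show "v a + coord_norm n d \<gamma> x \<le> coord_norm n d \<gamma> (scale a x)"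
    proof (rule coord_norm_greatest)
      fix j assume "j < n"
      then have "v a + coord_norm n d \<gamma> x \<le> v a + (v (polar q x (d j)) + Fin (\<gamma> j))"
        by (intro add_left_mono coord_norm_le)
      then show "v a + coord_norm n d \<gamma> x \<le> v (polar q (scale a x) (d j)) + Fin (\<gamma> j)"
        by (simp add: polar_scale_left valuation_mult[OF valuation] add.assoc)
    qed
  qed
qed

lemma coord_norm_add_ge: "min (coord_norm n d \<gamma> x) (coord_norm n d \<gamma> y) \<le> coord_norm n d \<gamma> (x + y)"
proof (rule coord_norm_greatest)
  fix i assume i: "i < n"
  have "min (coord_norm n d \<gamma> x) (coord_norm n d \<gamma> y)
      \<le> min (v (polar q x (d i)) + Fin (\<gamma> i)) (v (polar q y (d i)) + Fin (\<gamma> i))"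
    using coord_norm_le[OF i, of d \<gamma> x] coord_norm_le[OF i, of d \<gamma> y] by (auto simp: min_def)
  also have "\<dots> = min (v (polar q x (d i))) (v (polar q y (d i))) + Fin (\<gamma> i)"
    by (simp add: min_add_distrib_left_mono)
  also have "\<dots> \<le> v (polar q (x + y) (d i)) + Fin (\<gamma> i)"
    unfolding polar_add_left by (rule add_right_mono[OF valuation_add_ge[OF valuation]])
  finally show "min (coord_norm n d \<gamma> x) (coord_norm n d \<gamma> y) \<le> v (polar q (x + y) (d i)) + Fin (\<gamma> i)" .
qed

lemma coord_norm_split:
  assumes du: "dual_families n b d"
  shows "coord_norm n d \<gamma> (\<Sum>\<beta>\<in>b ` {..<n}. scale (c \<beta>) \<beta>) =
    (if b ` {..<n} = {} then Pinf else Min ((\<lambda>\<beta>. coord_norm n d \<gamma> (scale (c \<beta>) \<beta>)) ` b ` {..<n}))"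
proof -
  define x where "x = (\<Sum>i<n. scale (c (b i)) (b i))"
  have sx: "(\<Sum>\<beta>\<in>b ` {..<n}. scale (c \<beta>) \<beta>) = x"
    unfolding x_def using sum.reindex[OF dual_families_inj[OF du], of "\<lambda>\<beta>. scale (c \<beta>) \<beta>"]
    by (simp add: comp_def)
  have "polar q x (d j) = c (b j)" if "j < n" for j
    using polar_dual_sum[OF du order_refl that, of "\<lambda>i. c (b i)"] that unfolding x_def by simp
  then have "(\<lambda>\<beta>. coord_norm n d \<gamma> (scale (c \<beta>) \<beta>)) ` b ` {..<n}
      = (\<lambda>i. v (polar q x (d i)) + Fin (\<gamma> i)) ` {..<n}"
    unfolding image_image using coord_norm_scale coord_norm_basis[OF du] by (intro image_cong) auto
  then show ?thesis unfolding sx by (auto simp: coord_norm_def lessThan_empty_iff)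
qed

lemma v_norm_coord_norm:
  assumes du: "dual_families n b d" and sp: "span (b ` {..<n}) = UNIV"
  shows "v_norm v scale (coord_norm n d \<gamma>)"
  unfolding v_norm_def
  using coord_norm_not_Minf coord_norm_eq_Pinf_iff[OF du sp] coord_norm_scale coord_norm_add_ge
    coord_norm_split[OF du] dual_families_independent[OF du] sp
  by (intro conjI allI exI[of _ "b ` {..<n}"]) auto

lemma coord_norm_polar_ge:
  assumes du: "dual_families n b d" and sp: "span (b ` {..<n}) = UNIV"
    and gram: "\<forall>i<n. \<forall>j<n. Fin (\<gamma> i + \<gamma> j + \<epsilon>) \<le> v (polar q (b i) (b j))"
  shows "coord_norm n d \<gamma> x + coord_norm n d \<gamma> y + Fin \<epsilon> \<le> v (polar q x y)"
proof -
  let ?\<alpha> = "coord_norm n d \<gamma>" and ?c = "\<lambda>i x. polar q x (d i)"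
  have "polar q x y = polar q (\<Sum>i<n. scale (?c i x) (b i)) (\<Sum>j<n. scale (?c j y) (b j))"
    using dual_families_expansion[OF du] sp by simp
  also have "\<dots> = (\<Sum>i<n. \<Sum>j<n. ?c i x * (?c j y * polar q (b i) (b j)))"
    by (simp add: polar_sum_left polar_sum_right polar_scale_left polar_scale_right sum_distrib_left)
      (subst sum.swap, simp add: ac_simps)
  finally have expand: "polar q x y = \<dots>" .
  have "?\<alpha> x + ?\<alpha> y + Fin \<epsilon> \<le> v (?c i x * (?c j y * polar q (b i) (b j)))" if "i < n" "j < n" for i j
  proof -
    have "?\<alpha> x + ?\<alpha> y + Fin \<epsilon> \<le> (v (?c i x) + Fin (\<gamma> i)) + (v (?c j y) + Fin (\<gamma> j)) + Fin \<epsilon>"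
      by (intro add_right_mono add_mono coord_norm_le that)
    also have "\<dots> = v (?c i x) + (v (?c j y) + Fin (\<gamma> i + \<gamma> j + \<epsilon>))"
      by (simp only: plus_extended.simps(1)[symmetric] ac_simps)
    also have "\<dots> \<le> v (?c i x) + (v (?c j y) + v (polar q (b i) (b j)))"
      using gram that by (intro add_left_mono) auto
    finally show ?thesis by (simp add: valuation_mult[OF valuation])
  qed
  then show ?thesis unfolding expand by (intro valuation_sum_ge[OF valuation]) auto
qed

lemma coord_norm_partial_sum_ge:
  assumes du: "dual_families n b d" and J: "J \<subseteq> {..<n}"
  shows "coord_norm n d \<gamma> x \<le> coord_norm n d \<gamma> (\<Sum>i\<in>J. scale (polar q x (d i)) (b i))"
proof (rule coord_norm_greatest)
  fix k assume k: "k < n"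
  then show "coord_norm n d \<gamma> x \<le> v (polar q (\<Sum>i\<in>J. scale (polar q x (d i)) (b i)) (d k)) + Fin (\<gamma> k)"
    using polar_dual_sum[OF du J k] coord_norm_le[OF k, of d \<gamma> x]
    by (simp add: valuation_zero[OF valuation])
qed

text \<open>In characteristic 2 the Gram bound says nothing about \<open>q\<close> itself, hence the diagonal
  hypothesis; \<open>q\<close> is bounded term by term along the expansion of \<open>x\<close>.\<close>

lemma coord_norm_quadratic_ge:
  assumes du: "dual_families n b d" and sp: "span (b ` {..<n}) = UNIV" and "0 \<le> \<epsilon>"
    and gram: "\<forall>i<n. \<forall>j<n. Fin (\<gamma> i + \<gamma> j + \<epsilon>) \<le> v (polar q (b i) (b j))"
    and diag: "\<forall>i<n. Fin (\<gamma> i + \<gamma> i) \<le> v (q (b i))"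
  shows "coord_norm n d \<gamma> x + coord_norm n d \<gamma> x \<le> v (q x)"
proof -
  let ?\<alpha> = "coord_norm n d \<gamma>"
  define w where "w i = scale (polar q x (d i)) (b i)" for i
  have "m \<le> n \<Longrightarrow> ?\<alpha> x + ?\<alpha> x \<le> v (q (\<Sum>i<m. w i))" for m
  proof (induction m)
    case 0
    then show ?case by (simp add: valuation_zero[OF valuation])
  next
    case (Suc m)
    define s where "s = (\<Sum>i<m. w i)"
    have m: "m < n" using Suc.prems by simp
    have "?\<alpha> x + ?\<alpha> x \<le> (v (polar q x (d m)) + Fin (\<gamma> m)) + (v (polar q x (d m)) + Fin (\<gamma> m))"
      by (intro add_mono coord_norm_le m)
    also have "\<dots> = v (polar q x (d m)) + v (polar q x (d m)) + Fin (\<gamma> m + \<gamma> m)"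
      by (simp only: plus_extended.simps(1)[symmetric] ac_simps)
    also have "\<dots> \<le> v (polar q x (d m)) + v (polar q x (d m)) + v (q (b m))"
      using diag m by (intro add_left_mono) auto
    finally have wm: "?\<alpha> x + ?\<alpha> x \<le> v (q (w m))"
      by (simp add: w_def quadratic_scale valuation_mult[OF valuation] add.assoc)
    have "?\<alpha> x + ?\<alpha> x \<le> ?\<alpha> s + ?\<alpha> (w m)"
      using coord_norm_partial_sum_ge[OF du, of "{..<m}"] coord_norm_partial_sum_ge[OF du, of "{m}"] m
      unfolding s_def w_def by (intro add_mono) auto
    also have "\<dots> \<le> ?\<alpha> s + ?\<alpha> (w m) + Fin \<epsilon>"
      using \<open>0 \<le> \<epsilon>\<close> by (rule le_add_Fin_nonneg)
    also have "\<dots> \<le> v (polar q s (w m))" by (rule coord_norm_polar_ge[OF du sp gram])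
    finally have "?\<alpha> x + ?\<alpha> x \<le> min (min (v (q s)) (v (q (w m)))) (v (polar q s (w m)))"
      using Suc wm unfolding s_def by simp
    also have "\<dots> \<le> min (v (q s + q (w m))) (v (polar q s (w m)))"
      by (intro min.mono valuation_add_ge[OF valuation] order_refl)
    also have "\<dots> \<le> v (q s + q (w m) + polar q s (w m))" by (rule valuation_add_ge[OF valuation])
    finally show ?case by (simp add: s_def quadratic_add)
  qed
  from this[of n] show ?thesis using dual_families_expansion[OF du, of x] sp unfolding w_def by simp
qed

lemma coord_norm_polar_attained:
  assumes du: "dual_families n b d" and sp: "span (b ` {..<n}) = UNIV"
    and dual_norm: "\<forall>i<n. coord_norm n d \<gamma> (d i) = Fin (- \<gamma> i - \<epsilon>)" and "x \<noteq> 0"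
  obtains y where "y \<noteq> 0" "v (polar q x y) = coord_norm n d \<gamma> x + coord_norm n d \<gamma> y + Fin \<epsilon>"
proof -
  have "x = (\<Sum>i<n. scale (polar q x (d i)) (b i))" using dual_families_expansion[OF du] sp by simp
  then have "0 < n" using \<open>x \<noteq> 0\<close> by (metis lessThan_0 sum.empty neq0_conv)
  then obtain i where i: "i < n" "coord_norm n d \<gamma> x = v (polar q x (d i)) + Fin (\<gamma> i)"
    using coord_norm_attained by blast
  have "d i \<noteq> 0" using du i(1) unfolding dual_families_def by force
  moreover have "coord_norm n d \<gamma> x + coord_norm n d \<gamma> (d i) + Fin \<epsilon>
      = v (polar q x (d i)) + (Fin (\<gamma> i) + Fin (- \<gamma> i - \<epsilon>) + Fin \<epsilon>)"
    using dual_norm i by (simp only: ac_simps)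
  ultimately show ?thesis using that by (simp add: zero_extended_def[symmetric])
qed

lemma compatible_coord_norm:
  assumes du: "dual_families n b d" and sp: "span (b ` {..<n}) = UNIV" and "0 \<le> \<epsilon>"
    and gram: "\<forall>i<n. \<forall>j<n. Fin (\<gamma> i + \<gamma> j + \<epsilon>) \<le> v (polar q (b i) (b j))"
    and diag: "\<forall>i<n. Fin (\<gamma> i + \<gamma> i) \<le> v (q (b i))"
    and dual_norm: "\<forall>i<n. coord_norm n d \<gamma> (d i) = Fin (- \<gamma> i - \<epsilon>)"
  shows "compatible_depth v q (coord_norm n d \<gamma>) \<epsilon>"
  unfolding compatible_depth_def
  using assms coord_norm_polar_ge[OF du sp gram] coord_norm_quadratic_ge[OF du sp _ gram diag]
    coord_norm_polar_attained[OF du sp dual_norm]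
  by blast

lemma splitting_gram_bound:
  assumes S: "splitting n b d p"
    and line: "\<forall>i<n. p i = i \<longrightarrow> v (polar q (b i) (b i)) = Fin (\<gamma> i + \<gamma> i + \<epsilon>)"
    and plane: "\<forall>i<n. p i \<noteq> i \<longrightarrow> \<gamma> i + \<gamma> (p i) + \<epsilon> = 0"
    and ij: "i < n" "j < n"
  shows "Fin (\<gamma> i + \<gamma> j + \<epsilon>) \<le> v (polar q (b i) (b j))"
proof (cases "p j = j")
  case True
  then show ?thesis using polar_splitting_basis[OF S ij] line ij
    by (simp add: valuation_zero[OF valuation])
next
  case False
  then have "i = p j \<Longrightarrow> \<gamma> i + \<gamma> j + \<epsilon> = 0" using plane ij(2) by (simp add: ac_simps)
  then show ?thesis using polar_splitting_basis[OF S ij] False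
    by (simp add: valuation_zero[OF valuation] valuation_one[OF valuation])
qed

lemma splitting_coord_norm_dual:
  assumes S: "splitting n b d p"
    and line: "\<forall>i<n. p i = i \<longrightarrow> v (polar q (b i) (b i)) = Fin (\<gamma> i + \<gamma> i + \<epsilon>)"
    and plane: "\<forall>i<n. p i \<noteq> i \<longrightarrow> \<gamma> i + \<gamma> (p i) + \<epsilon> = 0"
    and i: "i < n"
  shows "coord_norm n d \<gamma> (d i) = Fin (- \<gamma> i - \<epsilon>)"
proof -
  have du: "dual_families n b d" by (rule splitting_dual_families[OF S])
  show ?thesis
  proof (cases "p i = i")
    case True
    define P where "P = polar q (b i) (b i)"
    have P: "P \<noteq> 0" "d i = scale (inverse P) (b i)" using splitting_line[OF S i True] P_def by auto
    have "coord_norm n d \<gamma> (d i) = v (inverse P) + Fin (\<gamma> i)"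
      using du i unfolding dual_families_def P(2)
      by (intro coord_norm_single_coordinate[OF i]) (simp add: polar_scale_left)
    also have "\<dots> = Fin (- \<gamma> i - \<epsilon>)"
      using valuation_inverse[OF valuation P(1)] line i True unfolding P_def by (simp add: algebra_simps)
    finally show ?thesis .
  next
    case False
    have pi: "p i < n" "p (p i) = i" using splitting_involution[OF S i] by auto
    have "coord_norm n d \<gamma> (d i) = v 1 + Fin (\<gamma> (p i))"
      using du i pi splitting_plane[OF S i False] unfolding dual_families_def
      by (intro coord_norm_single_coordinate[OF pi(1)]) simp
    also have "\<dots> = Fin (- \<gamma> i - \<epsilon>)"
      using plane i False valuation_one[OF valuation] by (simp add: algebra_simps eq_neg_iff_add_eq_0)
    finally show ?thesis .
  qed
qed

lemma compatible_splitting_norm: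
  assumes S: "splitting n b d p" and sp: "span (b ` {..<n}) = UNIV" and "0 \<le> \<epsilon>"
    and line: "\<forall>i<n. p i = i \<longrightarrow> v (polar q (b i) (b i)) = Fin (\<gamma> i + \<gamma> i + \<epsilon>)"
    and plane: "\<forall>i<n. p i \<noteq> i \<longrightarrow> \<gamma> i + \<gamma> (p i) + \<epsilon> = 0"
    and diag: "\<forall>i<n. Fin (\<gamma> i + \<gamma> i) \<le> v (q (b i))"
  shows "v_norm v scale (coord_norm n d \<gamma>) \<and> compatible_depth v q (coord_norm n d \<gamma>) \<epsilon>"
  using v_norm_coord_norm[OF splitting_dual_families[OF S] sp]
    compatible_coord_norm[OF splitting_dual_families[OF S] sp \<open>0 \<le> \<epsilon>\<close> _ diag]
    splitting_gram_bound[OF S line plane] splitting_coord_norm_dual[OF S line plane]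
  by blast

lemma compatible_norm_from_exponents:
  assumes dv: "divisible_group TYPE('g)"
    and S: "splitting n b d p" and sp: "span (b ` {..<n}) = UNIV" and "0 \<le> \<epsilon>"
    and bound: "\<forall>i<n. Fin (u i) \<le> v (q (b i))"
    and line: "\<forall>i<n. p i = i \<longrightarrow> v (polar q (b i) (b i)) = Fin (u i + \<epsilon>)"
    and plane: "\<forall>i<n. p i \<noteq> i \<longrightarrow> - (\<epsilon> + \<epsilon>) \<le> u i + u (p i)"
  shows "\<exists>\<alpha>. v_norm v scale \<alpha> \<and> compatible_depth v q \<alpha> \<epsilon>"
proof -
  define \<gamma> where "\<gamma> i = (if p i = i then half (u i) else plane_weight \<epsilon> (u i) (u (p i)))" for i
  have "v_norm v scale (coord_norm n d \<gamma>) \<and> compatible_depth v q (coord_norm n d \<gamma>) \<epsilon>"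
  proof (rule compatible_splitting_norm[OF S sp \<open>0 \<le> \<epsilon>\<close>])
    show "\<forall>i<n. p i = i \<longrightarrow> v (polar q (b i) (b i)) = Fin (\<gamma> i + \<gamma> i + \<epsilon>)"
      using line half_add_half[OF dv] unfolding \<gamma>_def by simp
    show "\<forall>i<n. p i \<noteq> i \<longrightarrow> \<gamma> i + \<gamma> (p i) + \<epsilon> = 0"
      using splitting_involution[OF S] plane_weight_pair[OF dv] unfolding \<gamma>_def by (simp add: eq_neg_iff_add_eq_0)
    show "\<forall>i<n. Fin (\<gamma> i + \<gamma> i) \<le> v (q (b i))"
    proof (intro allI impI)
      fix i assume i: "i < n"
      have "\<gamma> i + \<gamma> i \<le> u i"
      proof (cases "p i = i")
        case False
        then show ?thesis using plane_weight_double_le[OF dv] plane i unfolding \<gamma>_def by simp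
      qed (simp add: \<gamma>_def half_add_half[OF dv])
      then have "Fin (\<gamma> i + \<gamma> i) \<le> Fin (u i)" by simp
      then show "Fin (\<gamma> i + \<gamma> i) \<le> v (q (b i))" using bound i by (blast intro: order_trans)
    qed
  qed
  then show ?thesis by blast
qed

lemma compatible_norm_char_not_two:
  assumes dv: "divisible_group TYPE('g)" and two: "(2::'k) \<noteq> 0"
    and S: "splitting n b d p" and sp: "span (b ` {..<n}) = UNIV"
  shows "\<exists>\<alpha> \<epsilon>. v_norm v scale \<alpha> \<and> \<epsilon> \<in> half_value_group v \<and> 0 \<le> \<epsilon> \<and> Fin \<epsilon> \<le> v 2 \<and>
    compatible_depth v q \<alpha> \<epsilon>"
proof -
  define \<epsilon> where "\<epsilon> = fin_part (v 2)"
  define u where "u i = fin_part (v (q (b i)))" for i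
  have v2: "v 2 = Fin \<epsilon>" unfolding \<epsilon>_def by (rule valuation_fin_part[OF valuation two])
  have "0 \<le> \<epsilon>" using valuation_two_ge_zero[OF valuation] v2 by simp
  have "v (2 * 2) = Fin (\<epsilon> + \<epsilon>)" using v2 valuation_mult[OF valuation, of 2 2] by simp
  moreover have "(2::'k) * 2 \<noteq> 0" using two by (metis mult_eq_0_iff)
  ultimately have "\<epsilon> \<in> half_value_group v" unfolding half_value_group_def by blast
  moreover have "\<exists>\<alpha>. v_norm v scale \<alpha> \<and> compatible_depth v q \<alpha> \<epsilon>"
  proof (rule compatible_norm_from_exponents[OF dv S sp \<open>0 \<le> \<epsilon>\<close>])
    show "\<forall>i<n. Fin (u i) \<le> v (q (b i))"
      unfolding u_def using Fin_fin_part_le valuation_not_Minf[OF valuation] by blast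
    show "\<forall>i<n. p i = i \<longrightarrow> v (polar q (b i) (b i)) = Fin (u i + \<epsilon>)"
    proof (intro allI impI)
      fix i assume "i < n" "p i = i"
      then have "q (b i) \<noteq> 0" using splitting_line[OF S] by (auto simp: polar_self)
      then obtain g where "v (q (b i)) = Fin g" using valuation_Fin[OF valuation] by blast
      then show "v (polar q (b i) (b i)) = Fin (u i + \<epsilon>)"
        using v2 unfolding u_def
        by (simp add: polar_self valuation_mult[OF valuation] add.commute)
    qed
    have "q (b i) = 0" if "i < n" "p i \<noteq> i" for i
      using splitting_plane[OF S that] two by (simp add: polar_self)
    then show "\<forall>i<n. p i \<noteq> i \<longrightarrow> - (\<epsilon> + \<epsilon>) \<le> u i + u (p i)"
      using splitting_involution[OF S] \<open>0 \<le> \<epsilon>\<close>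
      by (auto simp: u_def valuation_zero[OF valuation] fin_part_def)
  qed
  ultimately show ?thesis using \<open>0 \<le> \<epsilon>\<close> v2 by auto
qed

text \<open>In characteristic 2 every block of a splitting is a plane. The exponent \<open>u\<^sub>i\<close> stands in
  for \<open>v(q(b\<^sub>i))\<close>; when \<open>q(b\<^sub>i) = 0\<close> it is chosen so that \<open>u\<^sub>i + u\<^sub>p\<^sub>i = 0\<close>, which makes
  \<open>-(u\<^sub>i + u\<^sub>p\<^sub>i)\<close> a value of \<open>F\<^sup>\<times>\<close> in every case.\<close>

lemma compatible_norm_char_two:
  assumes dv: "divisible_group TYPE('g)" and two: "(2::'k) = 0"
    and S: "splitting n b d p" and sp: "span (b ` {..<n}) = UNIV"
  shows "\<exists>\<alpha> \<epsilon>. v_norm v scale \<alpha> \<and> \<epsilon> \<in> half_value_group v \<and> 0 \<le> \<epsilon> \<and> Fin \<epsilon> \<le> v 2 \<and>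
    compatible_depth v q \<alpha> \<epsilon>"
proof -
  define u where "u i = (if q (b i) \<noteq> 0 then fin_part (v (q (b i)))
    else if q (b (p i)) \<noteq> 0 then - fin_part (v (q (b (p i)))) else 0)" for i
  define \<epsilon> where "\<epsilon> = Max (insert 0 ((\<lambda>i. half (- (u i + u (p i)))) ` {..<n}))"
  have "0 \<le> \<epsilon>" unfolding \<epsilon>_def by (simp add: Max_ge_iff)
  have "\<exists>a. a \<noteq> 0 \<and> v a = Fin (- (u i + u (p i)))" if i: "i < n" for i
  proof (cases "q (b i) \<noteq> 0 \<and> q (b (p i)) \<noteq> 0")
    case True
    then obtain g h where "v (q (b i)) = Fin g" "v (q (b (p i))) = Fin h"
      using valuation_Fin[OF valuation] by meson
    then have "v (q (b i) * q (b (p i))) = Fin (u i + u (p i))"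
      using True unfolding u_def by (simp add: valuation_mult[OF valuation])
    moreover have "q (b i) * q (b (p i)) \<noteq> 0" using True by simp
    ultimately show ?thesis
      using valuation_inverse[OF valuation] inverse_nonzero_iff_nonzero by blast
  next
    case False
    then have "u i + u (p i) = 0" using splitting_involution[OF S i] unfolding u_def by auto
    then show ?thesis using valuation_one[OF valuation] by (intro exI[of _ 1]) simp
  qed
  then have "\<epsilon> \<in> half_value_group v"
    unfolding \<epsilon>_def by (intro Max_half_in_half_value_group[OF valuation dv]) auto
  moreover have "\<exists>\<alpha>. v_norm v scale \<alpha> \<and> compatible_depth v q \<alpha> \<epsilon>"
  proof (rule compatible_norm_from_exponents[OF dv S sp \<open>0 \<le> \<epsilon>\<close>])
    show "\<forall>i<n. Fin (u i) \<le> v (q (b i))"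
      unfolding u_def using Fin_fin_part_le valuation_not_Minf[OF valuation] valuation_zero[OF valuation] by auto
    show "\<forall>i<n. p i = i \<longrightarrow> v (polar q (b i) (b i)) = Fin (u i + \<epsilon>)"
      using splitting_line[OF S] two by (auto simp: polar_self)
    show "\<forall>i<n. p i \<noteq> i \<longrightarrow> - (\<epsilon> + \<epsilon>) \<le> u i + u (p i)"
    proof (intro allI impI)
      fix i assume "i < n"
      then have "half (- (u i + u (p i))) \<le> \<epsilon>" unfolding \<epsilon>_def by (simp add: Max_ge_iff)
      then have "- (u i + u (p i)) \<le> \<epsilon> + \<epsilon>"
        using half_add_half[OF dv] add_self_le_add_self_iff by metis
      then show "- (\<epsilon> + \<epsilon>) \<le> u i + u (p i)" by (simp only: minus_le_iff)
    qed
  qed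
  ultimately show ?thesis using \<open>0 \<le> \<epsilon>\<close> two valuation_zero[OF valuation] by auto
qed

lemma nonsingular_compatible_norm:
  assumes dv: "divisible_group TYPE('g)" and ns: "nonsingular q" and B: "finite B" "span B = UNIV"
  shows "\<exists>\<alpha> \<epsilon>. v_norm v scale \<alpha> \<and> \<epsilon> \<in> half_value_group v \<and> 0 \<le> \<epsilon> \<and> Fin \<epsilon> \<le> v 2 \<and>
    compatible_depth v q \<alpha> \<epsilon>"
proof -
  obtain n b d p where "splitting n b d p" "span (b ` {..<n}) = UNIV"
    using splitting_exists[OF ns B] .
  then show ?thesis
    using compatible_norm_char_two[OF dv] compatible_norm_char_not_two[OF dv] by blast
qed

lemma hyperbolic_tame_norm:
  assumes "hyperbolic scale q"
  shows "\<exists>\<alpha>. v_norm v scale \<alpha> \<and> compatible_depth v q \<alpha> 0"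
proof -
  obtain n b d p where S: "splitting n b d p" "span (b ` {..<n}) = UNIV" "\<forall>i<n. p i \<noteq> i \<and> q (b i) = 0"
    using hyperbolic_splitting[OF assms] .
  have "v_norm v scale (coord_norm n d (\<lambda>_. 0)) \<and> compatible_depth v q (coord_norm n d (\<lambda>_. 0)) 0"
    using S(3) by (intro compatible_splitting_norm[OF S(1,2) order_refl]) (simp_all add: valuation_zero[OF valuation])
  then show ?thesis by blast
qed

end

theorem proposition4p3:
  fixes v :: "'k::field \<Rightarrow> 'g::linordered_ab_group_add extended"
    and scale :: "'k \<Rightarrow> 'v::ab_group_add \<Rightarrow> 'v"
  assumes "divisible_group TYPE('g)"
    and "valuation v"
    and "fin_dim_space scale"
  shows "(\<forall>q. quadratic_form scale q \<and> nonsingular q \<longrightarrow>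
            (\<exists>\<alpha> \<epsilon>. v_norm v scale \<alpha> \<and> \<epsilon> \<in> half_value_group v \<and> 0 \<le> \<epsilon> \<and> Fin \<epsilon> \<le> v 2 \<and>
                    compatible_depth v q \<alpha> \<epsilon>))
       \<and> (\<forall>q. quadratic_form scale q \<and> hyperbolic scale q \<longrightarrow>
            (\<exists>\<alpha>. v_norm v scale \<alpha> \<and> compatible_depth v q \<alpha> 0))"
proof -
  obtain B where vs: "vector_space scale" and B: "finite B" "module.span scale B = UNIV"
    using assms(3) unfolding fin_dim_space_def by blast
  have valued: "valued_quadratic_space scale q v" if "quadratic_form scale q" for q
    by (intro valued_quadratic_space.intro quadratic_space.intro quadratic_space_axioms.intro
        valued_quadratic_space_axioms.intro vs that assms(2))
  show ?thesis
  proof (intro conjI allI impI)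
    fix q assume "quadratic_form scale q \<and> nonsingular q"
    then show "\<exists>\<alpha> \<epsilon>. v_norm v scale \<alpha> \<and> \<epsilon> \<in> half_value_group v \<and> 0 \<le> \<epsilon> \<and> Fin \<epsilon> \<le> v 2 \<and>
        compatible_depth v q \<alpha> \<epsilon>"
      using valued_quadratic_space.nonsingular_compatible_norm[OF valued assms(1) _ B] by blast
  next
    fix q assume "quadratic_form scale q \<and> hyperbolic scale q"
    then show "\<exists>\<alpha>. v_norm v scale \<alpha> \<and> compatible_depth v q \<alpha> 0"
      using valued_quadratic_space.hyperbolic_tame_norm[OF valued] by blast
  qed
qed

end
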